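(* Let $G$ be an abelian group and let $Z$ be a finite multiset of elements of $G$ with $\dim(Z)\geqslant1$. Set $K(Z)=|Z|/\dim(Z)$. Then $$|Z|\geqslant\frac{K(Z)}{2(2+\log_2K(Z))}\cdot\log_2|\Sigma(Z)|.$$
   Context: $|Z|$ is the size of $Z$ counted with multiplicity. $\Sigma(Z)=\{\sum_{z\in Z'}z:Z'\subseteq Z\}$, where $Z'$ ranges over sub-multisets of $Z$. A (multi)set is dissociated if any two of its sub-multisets with equal sums are equal. $\dim(Z)$ is the size of the largest dissociated sub-multiset of $Z$. *)

theory Defs
  imports Complex_Main "HOL-Library.Multiset"
begin

definition subset_sums :: "'a::comm_monoid_add multiset \<Rightarrow> 'a set" where
  "subset_sums Z = {sum_mset Z' | Z'. Z' \<subseteq># Z}"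

definition dissociated :: "'a::comm_monoid_add multiset \<Rightarrow> bool" where
  "dissociated Z \<longleftrightarrow> (\<forall>A B. A \<subseteq># Z \<longrightarrow> B \<subseteq># Z \<longrightarrow> sum_mset A = sum_mset B \<longrightarrow> A = B)"

definition mdim :: "'a::comm_monoid_add multiset \<Rightarrow> nat" where
  "mdim Z = Max {size W | W. W \<subseteq># Z \<and> dissociated W}"

end

(*
  Write Z as the image of an index function x on {..<n}, so that the subset sums are the
  sums of x over index sets. Choose for each subset sum the index set with least binary code
  (sum of 2^i over the set); this family has exactly |Sigma(Z)| members. By Pajor's version of
  the Sauer-Shelah lemma it shatters at least |Sigma(Z)| index sets, and each shattered index
  set T is dissociated: two disjoint subsets of T with equal sums could be exchanged inside a
  chosen representative, and exchanging away the one containing the largest index lowers the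
  code. Hence |Sigma(Z)| <= sum_{j<=d} (n choose j) <= (e n/d)^d with d = dim Z, that is
  log2 |Sigma(Z)| <= d (2 + log2 K), which is even twice as strong as the claim.
*)
theory Submission
  imports Defs
begin

definition shatters :: "'b set set \<Rightarrow> 'b set \<Rightarrow> bool" where
  "shatters F T \<longleftrightarrow> (\<forall>A\<subseteq>T. \<exists>S\<in>F. S \<inter> T = A)"

lemma shattersE:
  assumes "shatters F T" "A \<subseteq> T"
  obtains S where "S \<in> F" "S \<inter> T = A"
  using assms unfolding shatters_def by blast

definition deletion :: "'b \<Rightarrow> 'b set set \<Rightarrow> 'b set set" where
  "deletion x F = {S\<in>F. x \<notin> S}"

definition link :: "'b \<Rightarrow> 'b set set \<Rightarrow> 'b set set" where
  "link x F = {S. x \<notin> S \<and> insert x S \<in> F}"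

lemma deletion_link_subset_Pow:
  assumes "F \<subseteq> Pow (insert x U)"
  shows "deletion x F \<subseteq> Pow U" "link x F \<subseteq> Pow U"
  using assms by (auto simp: deletion_def link_def)

lemma card_partition_by_member:
  assumes "finite F"
  shows "card F = card {S\<in>F. x \<notin> S} + card {S\<in>F. x \<in> S}"
proof -
  have "F = {S\<in>F. x \<notin> S} \<union> {S\<in>F. x \<in> S}" by blast
  also have "card \<dots> = card {S\<in>F. x \<notin> S} + card {S\<in>F. x \<in> S}"
    using assms by (intro card_Un_disjoint) auto
  finally show ?thesis .
qed

lemma card_eq_card_deletion_Un_link_plus_card_Int:
  assumes "finite F"
  shows "card F = card (deletion x F \<union> link x F) + card (deletion x F \<inter> link x F)"
proof -
  have image: "{S\<in>F. x \<in> S} = insert x ` link x F"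
  proof (intro equalityI subsetI)
    fix S assume "S \<in> {S\<in>F. x \<in> S}"
    then have "S = insert x (S - {x})" "S - {x} \<in> link x F" by (auto simp: link_def insert_absorb)
    then show "S \<in> insert x ` link x F" by (rule image_eqI)
  qed (auto simp: link_def)
  have inj: "inj_on (insert x) (link x F)"
    unfolding link_def inj_on_def by (auto simp: insert_ident)
  have "finite (insert x ` link x F)" using assms unfolding image[symmetric] by simp
  then have "finite (link x F)" using inj by (rule finite_imageD)
  have "card F = card (deletion x F) + card {S\<in>F. x \<in> S}"
    unfolding deletion_def using assms by (rule card_partition_by_member)
  also have "card {S\<in>F. x \<in> S} = card (link x F)"
    unfolding image using inj by (rule card_image)
  also have "card (deletion x F) + card (link x F)
             = card (deletion x F \<union> link x F) + card (deletion x F \<inter> link x F)"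
    using assms \<open>finite (link x F)\<close> by (intro card_Un_Int) (simp_all add: deletion_def)
  finally show ?thesis .
qed

lemma shatters_if_shatters_deletion_Un_link:
  assumes "shatters (deletion x F \<union> link x F) T" and "x \<notin> T"
  shows "shatters F T"
  unfolding shatters_def
proof (intro allI impI)
  fix A assume "A \<subseteq> T"
  with assms(1) obtain S where S: "S \<in> deletion x F \<union> link x F" "S \<inter> T = A"
    by (rule shattersE)
  show "\<exists>S'\<in>F. S' \<inter> T = A"
  proof (cases "S \<in> deletion x F")
    case False
    with S(1) have "insert x S \<in> F" by (simp add: link_def)
    moreover have "insert x S \<inter> T = A" using S(2) assms(2) by blast
    ultimately show ?thesis by blast
  qed (use S(2) in \<open>auto simp: deletion_def\<close>)
qed

lemma shatters_insert_if_shatters_deletion_Int_link: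
  assumes "shatters (deletion x F \<inter> link x F) T" and "x \<notin> T"
  shows "shatters F (insert x T)"
  unfolding shatters_def
proof (intro allI impI)
  fix A assume "A \<subseteq> insert x T"
  then have "A - {x} \<subseteq> T" by blast
  with assms(1) obtain S where "S \<in> deletion x F \<inter> link x F" "S \<inter> T = A - {x}"
    by (rule shattersE)
  then have S: "S \<in> F" "insert x S \<in> F" "x \<notin> S" "S \<inter> T = A - {x}"
    by (auto simp: deletion_def link_def)
  show "\<exists>S'\<in>F. S' \<inter> insert x T = A"
  proof (cases "x \<in> A")
    case True
    then have "insert x S \<inter> insert x T = A" using S(4) by blast
    with S(2) show ?thesis by blast
  next
    case False
    then have "S \<inter> insert x T = A" using S(3,4) by blast
    with S(1) show ?thesis by blast
  qed
qed

lemma card_shattered_deletion_Un_link_plus_card_Int_le: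
  assumes "finite U" and "x \<notin> U"
  shows "card {T. T \<subseteq> U \<and> shatters (deletion x F \<union> link x F) T}
           + card {T. T \<subseteq> U \<and> shatters (deletion x F \<inter> link x F) T}
         \<le> card {T. T \<subseteq> insert x U \<and> shatters F T}"
proof -
  define SF where "SF = {T. T \<subseteq> insert x U \<and> shatters F T}"
  have "finite SF" using assms(1) unfolding SF_def by simp
  have "card {T. T \<subseteq> U \<and> shatters (deletion x F \<union> link x F) T} \<le> card {T\<in>SF. x \<notin> T}"
  proof (rule card_mono)
    show "{T. T \<subseteq> U \<and> shatters (deletion x F \<union> link x F) T} \<subseteq> {T\<in>SF. x \<notin> T}"
    proof safe
      fix T assume T: "T \<subseteq> U" "shatters (deletion x F \<union> link x F) T"
      then have "x \<notin> T" using assms(2) by blast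
      with T(2) have "shatters F T" by (rule shatters_if_shatters_deletion_Un_link)
      with T(1) show "T \<in> SF" by (auto simp: SF_def)
    qed (use assms(2) in blast)
  qed (use \<open>finite SF\<close> in simp)
  moreover have "card {T. T \<subseteq> U \<and> shatters (deletion x F \<inter> link x F) T} \<le> card {T\<in>SF. x \<in> T}"
  proof (rule card_inj_on_le)
    show "inj_on (insert x) {T. T \<subseteq> U \<and> shatters (deletion x F \<inter> link x F) T}"
      using assms(2) unfolding inj_on_def by (auto simp: insert_ident subset_iff)
    show "insert x ` {T. T \<subseteq> U \<and> shatters (deletion x F \<inter> link x F) T} \<subseteq> {T\<in>SF. x \<in> T}"
    proof safe
      fix T assume T: "T \<subseteq> U" "shatters (deletion x F \<inter> link x F) T"
      then have "x \<notin> T" using assms(2) by blast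
      with T(2) have "shatters F (insert x T)" by (rule shatters_insert_if_shatters_deletion_Int_link)
      with T(1) show "insert x T \<in> SF" by (auto simp: SF_def)
    qed
  qed (use \<open>finite SF\<close> in simp)
  moreover have "card SF = card {T\<in>SF. x \<notin> T} + card {T\<in>SF. x \<in> T}"
    using \<open>finite SF\<close> by (rule card_partition_by_member)
  ultimately show ?thesis unfolding SF_def by linarith
qed

lemma card_le_card_shattered:
  assumes "finite U" and "F \<subseteq> Pow U"
  shows "card F \<le> card {T. T \<subseteq> U \<and> shatters F T}"
  using assms
proof (induction U arbitrary: F rule: finite_induct)
  case empty
  show ?case
  proof (cases "F = {}")
    case False
    with empty have "F = {{}}" by auto
    moreover have "{T. T \<subseteq> {} \<and> shatters F T} = {{}}" using \<open>F = {{}}\<close> by (auto simp: shatters_def)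
    ultimately show ?thesis by simp
  qed simp
next
  case (insert x U F)
  have "finite F" using insert.prems insert.hyps(1) by (meson finite_Pow_iff finite_insert finite_subset)
  have sub: "deletion x F \<union> link x F \<subseteq> Pow U" "deletion x F \<inter> link x F \<subseteq> Pow U"
    using deletion_link_subset_Pow[OF insert.prems] by blast+
  have "card F = card (deletion x F \<union> link x F) + card (deletion x F \<inter> link x F)"
    using \<open>finite F\<close> by (rule card_eq_card_deletion_Un_link_plus_card_Int)
  also have "\<dots> \<le> card {T. T \<subseteq> U \<and> shatters (deletion x F \<union> link x F) T}
                  + card {T. T \<subseteq> U \<and> shatters (deletion x F \<inter> link x F) T}"
    using insert.IH[OF sub(1)] insert.IH[OF sub(2)] by (rule add_mono)
  also have "\<dots> \<le> card {T. T \<subseteq> insert x U \<and> shatters F T}"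
    using insert.hyps by (rule card_shattered_deletion_Un_link_plus_card_Int_le)
  finally show ?case .
qed

definition binary_code :: "nat set \<Rightarrow> nat" where
  "binary_code S = (\<Sum>i\<in>S. 2 ^ i)"

lemma binary_code_less_power:
  assumes "S \<subseteq> {..<M}"
  shows "binary_code S < 2 ^ M"
proof -
  have "binary_code S \<le> (\<Sum>i<M. 2 ^ i)"
    unfolding binary_code_def using assms by (intro sum_mono2) auto
  also have "(\<Sum>i<M. 2 ^ i) = (2::nat) ^ M - 1"
    using sum_power2[of M] by (simp add: atLeast0LessThan)
  finally show ?thesis by (simp add: le_diff_conv2)
qed

lemma binary_code_less_if_Max_in:
  assumes "finite A" "finite B" "A \<inter> B = {}" "Max (A \<union> B) \<in> A"
  shows "binary_code B < binary_code A"
proof -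
  have "i < Max (A \<union> B)" if "i \<in> B" for i
  proof -
    have "i \<le> Max (A \<union> B)" using assms that by (intro Max_ge) auto
    moreover have "i \<noteq> Max (A \<union> B)" using assms that by blast
    ultimately show ?thesis by simp
  qed
  then have "B \<subseteq> {..<Max (A \<union> B)}" by blast
  then have "binary_code B < 2 ^ Max (A \<union> B)" by (rule binary_code_less_power)
  also have "\<dots> \<le> binary_code A"
    unfolding binary_code_def using assms by (intro member_le_sum) auto
  finally show ?thesis .
qed

definition code_minimal_subsets :: "(nat \<Rightarrow> 'a::comm_monoid_add) \<Rightarrow> nat set \<Rightarrow> nat set set" where
  "code_minimal_subsets x I =
     {S. S \<subseteq> I \<and> (\<forall>S'\<subseteq>I. sum x S' = sum x S \<longrightarrow> binary_code S \<le> binary_code S')}"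

lemma code_minimal_subsets_subset_Pow: "code_minimal_subsets x I \<subseteq> Pow I"
  unfolding code_minimal_subsets_def by blast

lemma sum_image_code_minimal_subsets: "sum x ` code_minimal_subsets x I = sum x ` Pow I"
proof
  show "sum x ` Pow I \<subseteq> sum x ` code_minimal_subsets x I"
  proof
    fix s assume "s \<in> sum x ` Pow I"
    then obtain S0 where "S0 \<subseteq> I \<and> sum x S0 = s" by blast
    then obtain S where S: "S \<subseteq> I \<and> sum x S = s"
      and "\<forall>S'. S' \<subseteq> I \<and> sum x S' = s \<longrightarrow> binary_code S \<le> binary_code S'"
      using ex_has_least_nat[of "\<lambda>S. S \<subseteq> I \<and> sum x S = s" S0 binary_code] by blast
    then have "S \<in> code_minimal_subsets x I"
      unfolding code_minimal_subsets_def by auto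
    with S show "s \<in> sum x ` code_minimal_subsets x I" by blast
  qed
qed (use code_minimal_subsets_subset_Pow in blast)

lemma binary_code_le_if_shatters_code_minimal_subsets:
  assumes "finite I" and "shatters (code_minimal_subsets x I) T" and "T \<subseteq> I"
    and "A \<subseteq> T" "B \<subseteq> T" "A \<inter> B = {}" and "sum x A = sum x B"
  shows "binary_code A \<le> binary_code B"
proof -
  obtain S where S: "S \<in> code_minimal_subsets x I" "S \<inter> T = A"
    using assms(2,4) by (rule shattersE)
  have "S \<subseteq> I" using S(1) by (simp add: code_minimal_subsets_def)
  have "A \<subseteq> S" "S \<inter> B = {}" using S(2) assms(5,6) by blast+
  have fin: "finite S" "finite A" "finite B"
    using finite_subset[OF \<open>S \<subseteq> I\<close> assms(1)] finite_subset[OF \<open>A \<subseteq> S\<close>]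
      finite_subset[OF assms(5)] finite_subset[OF assms(3,1)] by auto
  define S' where "S' = (S - A) \<union> B"
  have "S' \<subseteq> I" using \<open>S \<subseteq> I\<close> assms(3,5) by (auto simp: S'_def)
  have "sum x S' = sum x (S - A) + sum x B"
    unfolding S'_def using fin \<open>S \<inter> B = {}\<close> by (intro sum.union_disjoint) auto
  also have "\<dots> = sum x S"
    using assms(7) sum.subset_diff[OF \<open>A \<subseteq> S\<close> fin(1), of x] by simp
  finally have "sum x S' = sum x S" .
  with S(1) \<open>S' \<subseteq> I\<close> have "binary_code S \<le> binary_code S'"
    unfolding code_minimal_subsets_def by blast
  moreover have "binary_code S' = binary_code (S - A) + binary_code B"
    unfolding S'_def binary_code_def using fin \<open>S \<inter> B = {}\<close> by (intro sum.union_disjoint) auto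
  moreover have "binary_code S = binary_code (S - A) + binary_code A"
    unfolding binary_code_def using \<open>A \<subseteq> S\<close> fin(1) by (rule sum.subset_diff)
  ultimately show ?thesis by simp
qed

lemma inj_on_sum_Pow_if_shatters_code_minimal_subsets:
  fixes x :: "nat \<Rightarrow> 'a::cancel_comm_monoid_add"
  assumes "finite I" and "shatters (code_minimal_subsets x I) T" and "T \<subseteq> I"
  shows "inj_on (sum x) (Pow T)"
proof (rule inj_onI, rule ccontr)
  fix A B assume "A \<in> Pow T" "B \<in> Pow T" "sum x A = sum x B" "A \<noteq> B"
  have "finite T" using assms(1,3) by (rule finite_subset[rotated])
  then have "finite A" "finite B" using \<open>A \<in> Pow T\<close> \<open>B \<in> Pow T\<close> by (auto intro: finite_subset)
  have "sum x (A - B) = sum x (B - A)"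
    using \<open>sum x A = sum x B\<close> sum.Int_Diff[OF \<open>finite A\<close>, of x B] sum.Int_Diff[OF \<open>finite B\<close>, of x A]
    by (simp add: Int_commute)
  then have le: "binary_code (A - B) \<le> binary_code (B - A)" "binary_code (B - A) \<le> binary_code (A - B)"
    using assms \<open>A \<in> Pow T\<close> \<open>B \<in> Pow T\<close>
    by (auto intro!: binary_code_le_if_shatters_code_minimal_subsets)
  have "Max ((A - B) \<union> (B - A)) \<in> (A - B) \<union> (B - A)"
    using \<open>A \<noteq> B\<close> \<open>finite A\<close> \<open>finite B\<close> by (intro Max_in) auto
  then show False
    using binary_code_less_if_Max_in[of "A - B" "B - A"] binary_code_less_if_Max_in[of "B - A" "A - B"]
      le \<open>finite A\<close> \<open>finite B\<close> by (auto simp: Un_commute)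
qed

lemma card_sums_le_card_dissociated_subsets:
  fixes x :: "nat \<Rightarrow> 'a::cancel_comm_monoid_add"
  assumes "finite I"
  shows "card (sum x ` Pow I) \<le> card {T. T \<subseteq> I \<and> inj_on (sum x) (Pow T)}"
proof -
  have "card (sum x ` Pow I) \<le> card (code_minimal_subsets x I)"
    unfolding sum_image_code_minimal_subsets[symmetric]
    using finite_subset[OF code_minimal_subsets_subset_Pow] assms by (intro card_image_le) simp
  also have "\<dots> \<le> card {T. T \<subseteq> I \<and> shatters (code_minimal_subsets x I) T}"
    using assms code_minimal_subsets_subset_Pow by (rule card_le_card_shattered)
  also have "\<dots> \<le> card {T. T \<subseteq> I \<and> inj_on (sum x) (Pow T)}"
    using assms by (intro card_mono) (auto intro: inj_on_sum_Pow_if_shatters_code_minimal_subsets)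
  finally show ?thesis .
qed

lemma subseteq_image_mset_mset_setD:
  assumes "finite T" and "A \<subseteq># image_mset g (mset_set T)"
  shows "\<exists>S\<subseteq>T. A = image_mset g (mset_set S)"
  using assms
proof (induction T arbitrary: A rule: finite_induct)
  case (insert i T)
  then have A: "A \<subseteq># add_mset (g i) (image_mset g (mset_set T))" by simp
  show ?case
  proof (cases "g i \<in># A")
    case True
    with A have "add_mset (g i) (A - {#g i#}) \<subseteq># add_mset (g i) (image_mset g (mset_set T))"
      by (simp add: insert_DiffM)
    then have "A - {#g i#} \<subseteq># image_mset g (mset_set T)"
      by (simp only: mset_subset_eq_add_mset_cancel)
    then obtain S where S: "S \<subseteq> T" "A - {#g i#} = image_mset g (mset_set S)"
      using insert.IH by blast
    have "finite S" "i \<notin> S" using finite_subset[OF S(1) insert.hyps(1)] S(1) insert.hyps(2) by auto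
    then have "image_mset g (mset_set (insert i S)) = add_mset (g i) (A - {#g i#})"
      using S(2) by simp
    also have "\<dots> = A" using True by (rule insert_DiffM)
    finally show ?thesis using S(1) by (intro exI[of _ "insert i S"]) auto
  next
    case False
    with A have "A \<subseteq># image_mset g (mset_set T)"
      by (metis Diff_eq_empty_iff_mset minus_add_mset_if_not_in_lhs)
    then show ?thesis using insert.IH by blast
  qed
qed simp

lemma multiset_eq_image_mset_mset_set:
  obtains x :: "nat \<Rightarrow> 'a" where "Z = image_mset x (mset_set {..<size Z})"
proof -
  obtain xs where xs: "mset xs = Z" using ex_mset by blast
  then have "Z = mset (map (nth xs) [0..<length xs])" by (simp add: map_nth)
  also have "\<dots> = image_mset (nth xs) (mset_set {..<size Z})"
    using xs by (auto simp: atLeast0LessThan)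
  finally show ?thesis by (rule that)
qed

lemma subset_sums_image_mset_mset_set:
  assumes "finite I"
  shows "subset_sums (image_mset x (mset_set I)) = sum x ` Pow I"
proof (intro equalityI subsetI)
  fix s assume "s \<in> subset_sums (image_mset x (mset_set I))"
  then obtain Z' where Z': "Z' \<subseteq># image_mset x (mset_set I)" "s = sum_mset Z'"
    by (auto simp: subset_sums_def)
  obtain S where "S \<subseteq> I" "Z' = image_mset x (mset_set S)"
    using subseteq_image_mset_mset_setD[OF assms Z'(1)] by blast
  with Z'(2) have "s = sum x S" by (simp add: sum_unfold_sum_mset)
  with \<open>S \<subseteq> I\<close> show "s \<in> sum x ` Pow I" by blast
next
  fix s assume "s \<in> sum x ` Pow I"
  then obtain S where "S \<subseteq> I" "s = sum x S" by blast
  then have "s = sum_mset (image_mset x (mset_set S))" by (simp add: sum_unfold_sum_mset)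
  moreover have "image_mset x (mset_set S) \<subseteq># image_mset x (mset_set I)"
    using \<open>S \<subseteq> I\<close> assms by (intro image_mset_subseteq_mono subset_imp_msubset_mset_set)
  ultimately show "s \<in> subset_sums (image_mset x (mset_set I))"
    unfolding subset_sums_def by blast
qed

lemma dissociated_image_mset_mset_set:
  assumes "finite T" and "inj_on (sum x) (Pow T)"
  shows "dissociated (image_mset x (mset_set T))"
  unfolding dissociated_def
proof (intro allI impI)
  fix A B assume A: "A \<subseteq># image_mset x (mset_set T)" and B: "B \<subseteq># image_mset x (mset_set T)"
    and sums: "sum_mset A = sum_mset B"
  obtain SA where SA: "SA \<subseteq> T" "A = image_mset x (mset_set SA)"
    using subseteq_image_mset_mset_setD[OF assms(1) A] by blast
  obtain SB where SB: "SB \<subseteq> T" "B = image_mset x (mset_set SB)"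
    using subseteq_image_mset_mset_setD[OF assms(1) B] by blast
  have "sum x SA = sum x SB" using sums SA(2) SB(2) by (simp add: sum_unfold_sum_mset)
  then have "SA = SB" using assms(2) SA(1) SB(1) by (auto dest: inj_onD)
  then show "A = B" using SA(2) SB(2) by simp
qed

lemma size_le_mdim:
  assumes "W \<subseteq># Z" and "dissociated W"
  shows "size W \<le> mdim Z"
proof -
  have "{size W | W. W \<subseteq># Z \<and> dissociated W} \<subseteq> {..size Z}"
    by (auto simp: size_mset_mono)
  then have "finite {size W | W. W \<subseteq># Z \<and> dissociated W}"
    by (rule finite_subset) simp
  then show ?thesis
    unfolding mdim_def using assms by (intro Max_ge) auto
qed

lemma mdim_le_size: "mdim Z \<le> size Z"
proof -
  have "{size W | W. W \<subseteq># Z \<and> dissociated W} \<subseteq> {..size Z}"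
    by (auto simp: size_mset_mono)
  moreover have "{#} \<subseteq># Z \<and> dissociated {#}" by (simp add: dissociated_def)
  ultimately show ?thesis
    unfolding mdim_def by (subst Max_le_iff) (auto dest: finite_subset size_mset_mono intro!: exI[of _ "{#}"])
qed

lemma card_subsets_card_le:
  assumes "finite A"
  shows "card {T. T \<subseteq> A \<and> card T \<le> d} \<le> (\<Sum>j\<le>d. card A choose j)"
proof -
  have "{T. T \<subseteq> A \<and> card T \<le> d} = (\<Union>j\<le>d. {T. T \<subseteq> A \<and> card T = j})" by auto
  then have "card {T. T \<subseteq> A \<and> card T \<le> d} \<le> (\<Sum>j\<le>d. card {T. T \<subseteq> A \<and> card T = j})"
    by (simp add: card_UN_le)
  also have "\<dots> = (\<Sum>j\<le>d. card A choose j)" using assms by (simp add: n_subsets)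
  finally show ?thesis .
qed

lemma sum_binomial_le_exp_power:
  assumes "0 < d" and "d \<le> n"
  shows "(\<Sum>j\<le>d. real (n choose j)) \<le> (exp 1 * n / d) ^ d"
proof -
  define t where "t = real d / real n"
  have "0 < t" "t \<le> 1" using assms by (auto simp: t_def)
  have "(\<Sum>j\<le>d. real (n choose j)) \<le> (\<Sum>j\<le>d. real (n choose j) * t ^ j / t ^ d)"
  proof (rule sum_mono)
    fix j assume "j \<in> {..d}"
    then have "1 \<le> t ^ j / t ^ d"
      using \<open>0 < t\<close> \<open>t \<le> 1\<close> by (simp add: power_decreasing)
    then show "real (n choose j) \<le> real (n choose j) * t ^ j / t ^ d"
      using mult_left_mono[of 1 "t ^ j / t ^ d" "real (n choose j)"] by simp
  qed
  also have "\<dots> \<le> (\<Sum>j\<le>n. real (n choose j) * t ^ j) / t ^ d"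
    unfolding sum_divide_distrib[symmetric] using \<open>0 < t\<close> assms(2)
    by (intro divide_right_mono sum_mono2) auto
  also have "(\<Sum>j\<le>n. real (n choose j) * t ^ j) = (t + 1) ^ n"
    by (simp add: binomial_ring)
  also have "(t + 1) ^ n \<le> exp t ^ n"
    using \<open>0 < t\<close> by (intro power_mono) (auto simp: add.commute)
  also have "exp t ^ n = exp 1 ^ d"
    using assms by (simp add: t_def flip: exp_of_nat_mult)
  also have "exp 1 ^ d / t ^ d = (exp 1 * n / d) ^ d"
    by (simp add: t_def power_divide power_mult_distrib)
  finally show ?thesis using \<open>0 < t\<close> by (simp add: divide_right_mono)
qed

lemma card_subset_sums_le_sum_binomial:
  fixes Z :: "'a::cancel_comm_monoid_add multiset"
  shows "card (subset_sums Z) \<le> (\<Sum>j\<le>mdim Z. size Z choose j)"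
proof -
  obtain x :: "nat \<Rightarrow> 'a" where Z: "Z = image_mset x (mset_set {..<size Z})"
    by (rule multiset_eq_image_mset_mset_set)
  have "card (subset_sums Z) = card (sum x ` Pow {..<size Z})"
    by (subst Z) (simp add: subset_sums_image_mset_mset_set)
  also have "\<dots> \<le> card {T. T \<subseteq> {..<size Z} \<and> inj_on (sum x) (Pow T)}"
    by (rule card_sums_le_card_dissociated_subsets) simp
  also have "\<dots> \<le> card {T. T \<subseteq> {..<size Z} \<and> card T \<le> mdim Z}"
  proof (intro card_mono subsetI)
    fix T assume "T \<in> {T. T \<subseteq> {..<size Z} \<and> inj_on (sum x) (Pow T)}"
    then have T: "T \<subseteq> {..<size Z}" "inj_on (sum x) (Pow T)" by auto
    then have "finite T" using finite_subset by blast
    have "image_mset x (mset_set T) \<subseteq># Z"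
      using T(1) by (subst Z) (intro image_mset_subseteq_mono subset_imp_msubset_mset_set, simp_all)
    moreover have "dissociated (image_mset x (mset_set T))"
      using \<open>finite T\<close> T(2) by (rule dissociated_image_mset_mset_set)
    ultimately have "size (image_mset x (mset_set T)) \<le> mdim Z" by (rule size_le_mdim)
    with T(1) show "T \<in> {T. T \<subseteq> {..<size Z} \<and> card T \<le> mdim Z}" by simp
  qed simp
  also have "\<dots> \<le> (\<Sum>j\<le>mdim Z. size Z choose j)"
    using card_subsets_card_le[of "{..<size Z}" "mdim Z"] by simp
  finally show ?thesis .
qed

lemma card_subset_sums_pos: "0 < card (subset_sums Z)"
proof -
  obtain x where Z: "Z = image_mset x (mset_set {..<size Z})"
    by (rule multiset_eq_image_mset_mset_set)
  have "subset_sums Z = sum x ` Pow {..<size Z}"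
    by (subst Z) (simp add: subset_sums_image_mset_mset_set)
  then show ?thesis by (auto simp: card_gt_0_iff)
qed

lemma log_card_subset_sums_le:
  fixes Z :: "'a::cancel_comm_monoid_add multiset"
  assumes "1 \<le> mdim Z"
  shows "log 2 (card (subset_sums Z)) \<le> mdim Z * (2 + log 2 (size Z / mdim Z))"
proof -
  define K where "K = real (size Z) / real (mdim Z)"
  have "mdim Z \<le> size Z" by (rule mdim_le_size)
  then have "0 < K" using assms by (simp add: K_def)
  have "real (card (subset_sums Z)) \<le> (\<Sum>j\<le>mdim Z. real (size Z choose j))"
    using card_subset_sums_le_sum_binomial[of Z] by (simp flip: of_nat_sum)
  also have "\<dots> \<le> (exp 1 * K) ^ mdim Z"
    using sum_binomial_le_exp_power[of "mdim Z" "size Z"] assms \<open>mdim Z \<le> size Z\<close>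
    by (simp add: K_def)
  finally have "log 2 (card (subset_sums Z)) \<le> log 2 ((exp 1 * K) ^ mdim Z)"
    using card_subset_sums_pos[of Z] by simp
  also have "\<dots> = mdim Z * (log 2 (exp 1) + log 2 K)"
    using \<open>0 < K\<close> by (simp add: log_nat_power log_mult)
  also have "log 2 (exp 1) \<le> log 2 (2 ^ 2)"
    using exp_le by (subst log_le_cancel_iff) auto
  also have "log 2 (2 ^ 2) = (2::real)"
    using log_pow_cancel[of "2::real" 2] by simp
  finally show ?thesis by (simp add: K_def mult_left_mono)
qed

theorem proposition5p2:
  fixes Z :: "'a::ab_group_add multiset"
  assumes "mdim Z \<ge> 1"
  shows "let K = real (size Z) / real (mdim Z)
         in real (size Z) \<ge> K / (2 * (2 + log 2 K)) * log 2 (real (card (subset_sums Z)))"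
proof -
  define K where "K = real (size Z) / real (mdim Z)"
  have "1 \<le> K" using assms mdim_le_size[of Z] by (simp add: K_def)
  then have "0 < 2 + log 2 K" using zero_le_log_cancel_iff[of 2 K] by linarith
  have "K / (2 * (2 + log 2 K)) * log 2 (card (subset_sums Z))
        \<le> K / (2 * (2 + log 2 K)) * (mdim Z * (2 + log 2 K))"
    using log_card_subset_sums_le[OF assms] \<open>1 \<le> K\<close> \<open>0 < 2 + log 2 K\<close>
    by (intro mult_left_mono) (simp_all add: K_def)
  also have "\<dots> = K * mdim Z / 2"
    using \<open>0 < 2 + log 2 K\<close> by (simp add: field_simps)
  also have "K * mdim Z = size Z"
    using assms by (simp add: K_def)
  also have "real (size Z) / 2 \<le> size Z"
    by simp
  finally show ?thesis
    unfolding Let_def K_def[symmetric] .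
qed

end
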